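(* Let $s>1$, $n \geq 2$ and $k \geq 1$ be given ($s$ real, $n,k$ integers). Then $$H_k(n) \leq \frac{\left(\zeta(s)-1\right)^{k-1} n^s}{2^s}.$$ Moreover, if $n$ is odd, then $$H_k(n) \leq \frac{\left(\left(1-2^{-s}\right)\zeta(s)-1\right)^{k-1} n^s}{3^s}.$$
   Context: $H_k(n)$ is the number of ordered $k$-tuples $(d_1,\dots,d_k)$ of integers $d_i\ge 2$ with $d_1\cdots d_k=n$. $\zeta$ is the Riemann zeta function. *)

theory Defs
  imports "HOL-Analysis.Analysis"
begin

definition H :: "nat \<Rightarrow> nat \<Rightarrow> nat" where
  "H k n = card {ds :: nat list. length ds = k \<and> (\<forall>d\<in>set ds. d \<ge> 2) \<and> prod_list ds = n}"

definition zeta :: "real \<Rightarrow> real" where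
  "zeta s = (\<Sum>m. 1 / (real (Suc m)) powr s)"

end

theory Submission
  imports Defs
begin

(* Splitting off the first factor d of a factorisation of n gives
   H_{k+1}(n) \<le> \<Sum>_{d | n, d \<ge> 2} H_k(n/d).  If every admissible factor is at least a,
   then H_1(n) \<le> (n/a)^s, and induction on k turns the recursion into
   H_{k+1}(n) \<le> c^k (n/a)^s, where c bounds \<Sum> d^{-s} over admissible d \<ge> 2.
   In general a = 2 and c = \<zeta>(s) - 1; for odd n all factors are odd, so a = 3 and
   c = (1 - 2^{-s}) \<zeta>(s) - 1, the odd part of the Dirichlet series of \<zeta> without its
   first term. *)

definition ordered_factorisations :: "nat \<Rightarrow> nat \<Rightarrow> nat list set" where
  "ordered_factorisations k n =
     {ds. length ds = k \<and> (\<forall>d\<in>set ds. d \<ge> 2) \<and> prod_list ds = n}"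

lemma H_eq_card_ordered_factorisations: "H k n = card (ordered_factorisations k n)"
  by (simp add: H_def ordered_factorisations_def)

lemma ordered_factorisations_Suc:
  "ordered_factorisations (Suc k) n =
     (\<Union>d\<in>{d. d dvd n \<and> d \<ge> 2}. Cons d ` ordered_factorisations k (n div d))"
  by (fastforce simp: ordered_factorisations_def length_Suc_conv image_iff)

lemma H_one: "H 1 n = (if n \<ge> 2 then 1 else 0)"
proof -
  have "ordered_factorisations 1 n = (if n \<ge> 2 then {[n]} else {})"
    by (auto simp: ordered_factorisations_def length_Suc_conv)
  then show ?thesis
    by (simp add: H_eq_card_ordered_factorisations)
qed

lemma H_Suc_le_sum_divisors:
  assumes "n \<noteq> 0"
  shows "H (Suc k) n \<le> (\<Sum>d | d dvd n \<and> d \<ge> 2. H k (n div d))"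
proof -
  have "finite {d. d dvd n \<and> d \<ge> 2}"
    using assms by (auto intro: finite_subset[of _ "{..n}"] dvd_imp_le)
  then have "H (Suc k) n \<le>
      (\<Sum>d | d dvd n \<and> d \<ge> 2. card (Cons d ` ordered_factorisations k (n div d)))"
    unfolding H_eq_card_ordered_factorisations ordered_factorisations_Suc
    by (rule card_UN_le)
  then show ?thesis
    by (simp add: card_image H_eq_card_ordered_factorisations)
qed

lemma H_Suc_le_powr:
  fixes s a c :: real and P :: "nat \<Rightarrow> bool"
  assumes "s \<ge> 0" and "a > 0"
    and P_dvd: "\<And>m d. P m \<Longrightarrow> d dvd m \<Longrightarrow> P d"
    and "\<And>m. P m \<Longrightarrow> m \<ge> 2 \<Longrightarrow> real m \<ge> a"
    and sum_le: "\<And>F. finite F \<Longrightarrow> \<forall>d\<in>F. d \<ge> 2 \<and> P d \<Longrightarrow> (\<Sum>d\<in>F. 1 / real d powr s) \<le> c"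
    and "P m" and "m \<noteq> 0"
  shows "real (H (Suc k) m) \<le> c ^ k * real m powr s / a powr s"
  using \<open>P m\<close> \<open>m \<noteq> 0\<close>
proof (induction k arbitrary: m)
  case 0
  then have "m \<ge> 2 \<Longrightarrow> a powr s \<le> real m powr s"
    using assms by (intro powr_mono2) auto
  then show ?case
    using \<open>a > 0\<close> H_one[of m] by simp
next
  case (Suc k)
  define D where "D = {d. d dvd m \<and> d \<ge> 2}"
  define B where "B = c ^ k * real m powr s / a powr s"
  have "finite D"
    using Suc.prems by (auto simp: D_def intro: finite_subset[of _ "{..m}"] dvd_imp_le)
  have "c \<ge> 0"
    using sum_le[of "{}"] by simp
  have "real (H (Suc (Suc k)) m) \<le> (\<Sum>d\<in>D. real (H (Suc k) (m div d)))"
    unfolding D_def of_nat_sum[symmetric] of_nat_le_iff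
    using \<open>m \<noteq> 0\<close> by (rule H_Suc_le_sum_divisors)
  also have "\<dots> \<le> (\<Sum>d\<in>D. B * (1 / real d powr s))"
  proof (rule sum_mono)
    fix d assume "d \<in> D"
    then have "d dvd m" "d \<ge> 2"
      by (auto simp: D_def)
    then have "P (m div d)" "m div d \<noteq> 0"
      using Suc.prems P_dvd by (auto elim!: dvdE)
    then have "real (H (Suc k) (m div d)) \<le> c ^ k * real (m div d) powr s / a powr s"
      by (rule Suc.IH)
    also have "\<dots> = B * (1 / real d powr s)"
      using \<open>d dvd m\<close> by (simp add: B_def real_of_nat_div powr_divide)
    finally show "real (H (Suc k) (m div d)) \<le> B * (1 / real d powr s)" .
  qed
  also have "\<dots> = B * (\<Sum>d\<in>D. 1 / real d powr s)"
    by (simp add: sum_distrib_left)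
  also have "\<dots> \<le> B * c"
    using sum_le[OF \<open>finite D\<close>] Suc.prems P_dvd \<open>c \<ge> 0\<close>
    by (intro mult_left_mono) (auto simp: B_def D_def)
  finally show ?case
    by (simp add: B_def mult_ac)
qed

lemma zeta_has_sum:
  assumes "s > 1"
  shows "((\<lambda>d. 1 / real d powr s) has_sum zeta s) {1..}"
proof -
  have "summable (\<lambda>m. real (Suc m) powr (-s))"
    using assms by (subst summable_Suc_iff) (simp add: summable_real_powr_iff)
  then have "(\<lambda>m. 1 / real (Suc m) powr s) sums zeta s"
    unfolding zeta_def by (simp add: powr_minus_divide summable_sums)
  then have "((\<lambda>m. 1 / real (Suc m) powr s) has_sum zeta s) UNIV"
    by (rule sums_nonneg_imp_has_sum) simp
  moreover have "{1..} = range Suc"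
    by (auto simp: image_iff Suc_le_D)
  ultimately show ?thesis
    by (simp add: has_sum_reindex o_def)
qed

lemma zeta_has_sum_odd:
  assumes "s > 1"
  shows "((\<lambda>d. 1 / real d powr s) has_sum (1 - 2 powr (-s)) * zeta s) {d. odd d}"
proof -
  have "((\<lambda>d. 1 / real d powr s) \<circ> (*) 2) = (\<lambda>d. 2 powr (-s) * (1 / real d powr s))"
    by (simp add: o_def powr_mult powr_minus_divide)
  then have "((\<lambda>d. 1 / real d powr s) has_sum 2 powr (-s) * zeta s) ((*) 2 ` {1..})"
    using has_sum_cmult_right[OF zeta_has_sum[OF assms]]
    by (subst has_sum_reindex) (simp_all add: inj_on_def)
  from has_sum_Diff[OF zeta_has_sum[OF assms] this]
  have "((\<lambda>d. 1 / real d powr s) has_sum zeta s - 2 powr (-s) * zeta s) ({1..} - (*) 2 ` {1..})"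
    by (auto simp: image_subset_iff)
  moreover have "{1..} - (*) 2 ` {1..} = {d::nat. odd d}"
    by (auto simp: image_iff Suc_le_eq odd_pos elim!: evenE)
  ultimately show ?thesis
    by (simp add: algebra_simps)
qed

lemma sum_le_has_sum_minus:
  fixes f :: "'a \<Rightarrow> real"
  assumes "(f has_sum S) A" and "x \<in> A" and "finite F" and "F \<subseteq> A - {x}"
    and "\<And>y. y \<in> A \<Longrightarrow> f y \<ge> 0"
  shows "sum f F \<le> S - f x"
proof -
  have "sum f (insert x F) \<le> S"
    using assms by (intro finite_sum_le_has_sum) auto
  moreover have "x \<notin> F"
    using assms(4) by blast
  ultimately show ?thesis
    using assms(3) by simp
qed

theorem corollary2p5:
  fixes s :: real and n k :: nat
  assumes "s > 1" and "n \<ge> 2" and "k \<ge> 1"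
  shows "real (H k n) \<le> (zeta s - 1) ^ (k - 1) * real n powr s / 2 powr s
     \<and> (odd n \<longrightarrow>
         real (H k n) \<le> ((1 - 2 powr (-s)) * zeta s - 1) ^ (k - 1) * real n powr s / 3 powr s)"
proof -
  obtain j where k: "k = Suc j"
    using \<open>k \<ge> 1\<close> by (cases k) auto
  have "real (H (Suc j) n) \<le> (zeta s - 1) ^ j * real n powr s / 2 powr s"
  proof (rule H_Suc_le_powr[where P = "\<lambda>_. True"])
    show "(\<Sum>d\<in>F. 1 / real d powr s) \<le> zeta s - 1" if "finite F" "\<forall>d\<in>F. d \<ge> 2 \<and> True" for F
      using sum_le_has_sum_minus[OF zeta_has_sum[OF \<open>s > 1\<close>], of 1 F] that by force
  qed (use assms in auto)
  moreover have "real (H (Suc j) n) \<le> ((1 - 2 powr (-s)) * zeta s - 1) ^ j * real n powr s / 3 powr s"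
    if "odd n"
  proof (rule H_Suc_le_powr[where P = odd])
    show "(\<Sum>d\<in>F. 1 / real d powr s) \<le> (1 - 2 powr (-s)) * zeta s - 1"
      if "finite F" "\<forall>d\<in>F. d \<ge> 2 \<and> odd d" for F
      using sum_le_has_sum_minus[OF zeta_has_sum_odd[OF \<open>s > 1\<close>], of 1 F] that by force
    show "real m \<ge> 3" if "odd m" "m \<ge> 2" for m :: nat
      using that by (cases "m = 2") auto
  qed (use assms \<open>odd n\<close> in \<open>auto intro: dvd_trans\<close>)
  ultimately show ?thesis
    by (simp add: k)
qed

end
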